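(* Assume Assumption A-0 holds and let $\psi:\mathbb{R}^d\to\mathbb{R}$ be a bounded measurable function. Define recursively $\alpha(0)=2$, $\beta(0)=2$ and, for $T\ge 1$, $\alpha(T)=4\max(1,\alpha(T-1))$, $\beta(T)=\max\!\big(8,\ 16\beta(T-1)\gamma_T^2/\kappa_T^2\big)$. Then for every $T\ge 0$, every $N\ge1$ and every $\varepsilon>0$, $$\mathbb{P}_T\Big(\Big|\frac1N\sum_{i=1}^N\psi(x_{i,T})-m_T(\psi)\Big|>\varepsilon\Big)\le \alpha(T)\,e^{-N\varepsilon^2/(\beta(T)\|\psi\|_\infty^2)},$$ and for every $T\ge1$, $$\mathbb{P}_T\Big(\Big|\int\psi\,(f^N_{T|T}-f_{T|T})\,d\mu\Big|>\varepsilon\Big)\le \alpha(T)\,e^{-N\varepsilon^2/(\beta(T)\|\psi\|_\infty^2)}.$$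
   Context: Hidden Markov model: $(X_t)_{t\ge0}$ is an $\mathbb{R}^d$-valued Markov chain with $\mathbb{P}(X_0\in A)=\int_A a_0\,d\mu$ and $\mathbb{P}(X_t\in A\mid X_{t-1}=x)=\int_A a_t(x,x')\,\mu(dx')$ ($t\ge1$), where $\mu$ is a reference measure on $\mathbb{R}^d$ and $a_0$, $a_t$ are a probability density and probability kernel densities w.r.t. $\mu$. Observations $(Y_t)_{t\ge1}$ are $\mathbb{R}^m$-valued, conditionally independent given $(X_t)$, with $\mathbb{P}(Y_t\in B\mid X_t=x)=\int_B b_t(x,y)\,\nu(dy)$. Observations $y_1,\dots,y_T$ are fixed, and $\mathbb{P}_T=\mathbb{P}(\cdot\mid Y_1=y_1,\dots,Y_T=y_T)$ with expectation $\mathbb{E}_T$. The filter density $f_{t|t}$ (density of $X_t$ given $Y_1^t=y_1^t$ w.r.t. $\mu$) satisfies $f_{0|0}=a_0$ and $f_{t|t}(x)=\frac{b_t(x,y_t)\int f_{t-1|t-1}(u)a_t(u,x)\mu(du)}{\int b_t(x',y_t)\int f_{t-1|t-1}(u)a_t(u,x')\mu(du)\mu(dx')}$. Particle filter with $N$ particles: $(x_{i,0})_{1\le i\le N}$ i.i.d. with law $a_0\,d\mu$; given all particles up to generation $t-1$, the $(x_{i,t})_{1\le i\le N}$ are i.i.d. with law $f^N_{t|t}\,d\mu$, where $$f^N_{t|t}(x)=\frac{b_t(x,y_t)\frac1N\sum_{i=1}^N a_t(x_{i,t-1},x)}{\int b_t(x',y_t)\frac1N\sum_{i=1}^N a_t(x_{i,t-1},x')\,\mu(dx')}.$$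 Notation: $m_t(\psi)=\int\psi f_{t|t}\,d\mu$; $L_t\psi(x)=\int a_t(x,u)b_t(u,y_t)\psi(u)\,\mu(du)$; $\mathbb{1}$ is the constant function 1. Assumption A-0: for every $t\ge1$, $\gamma_t:=\sup_x L_t\mathbb{1}(x)<\infty$ and $L_t\mathbb{1}(x)>0$ for all $x\in\mathbb{R}^d$. Under A-0, $\kappa_t:=\int L_t\mathbb{1}(x)f_{t-1|t-1}(x)\,\mu(dx)>0$. *)

theory Defs
  imports "HOL-Probability.Probability"
begin

text \<open>Hidden Markov model data: reference measure mu on the state space,
  initial density a0, transition kernel densities a t, observation densities b t
  (w.r.t. nu), fixed observations y t.  Particles are indexed by 0..N-1.\<close>

definition Lone :: "'a measure \<Rightarrow> (nat \<Rightarrow> 'a \<Rightarrow> 'a \<Rightarrow> real) \<Rightarrow> (nat \<Rightarrow> 'a \<Rightarrow> 'b \<Rightarrow> real)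
    \<Rightarrow> (nat \<Rightarrow> 'b) \<Rightarrow> nat \<Rightarrow> 'a \<Rightarrow> ennreal" where
  "Lone mu a b y t x = (\<integral>\<^sup>+ u. ennreal (a t x u * b t u (y t)) \<partial>mu)"

fun filt :: "'a measure \<Rightarrow> ('a \<Rightarrow> real) \<Rightarrow> (nat \<Rightarrow> 'a \<Rightarrow> 'a \<Rightarrow> real) \<Rightarrow> (nat \<Rightarrow> 'a \<Rightarrow> 'b \<Rightarrow> real)
    \<Rightarrow> (nat \<Rightarrow> 'b) \<Rightarrow> nat \<Rightarrow> 'a \<Rightarrow> real" where
  "filt mu a0 a b y 0 = a0"
| "filt mu a0 a b y (Suc t) =
     (let pred = (\<lambda>x. \<integral>\<^sup>+ u. ennreal (filt mu a0 a b y t u * a (Suc t) u x) \<partial>mu);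
          num = (\<lambda>x. ennreal (b (Suc t) x (y (Suc t))) * pred x)
      in (\<lambda>x. enn2real (num x) / enn2real (\<integral>\<^sup>+ x'. num x' \<partial>mu)))"

definition mfilt :: "'a measure \<Rightarrow> ('a \<Rightarrow> real) \<Rightarrow> (nat \<Rightarrow> 'a \<Rightarrow> 'a \<Rightarrow> real) \<Rightarrow> (nat \<Rightarrow> 'a \<Rightarrow> 'b \<Rightarrow> real)
    \<Rightarrow> (nat \<Rightarrow> 'b) \<Rightarrow> nat \<Rightarrow> ('a \<Rightarrow> real) \<Rightarrow> real" where
  "mfilt mu a0 a b y t psi = (\<integral> x. psi x * filt mu a0 a b y t x \<partial>mu)"

definition pf_dens :: "'a measure \<Rightarrow> (nat \<Rightarrow> 'a \<Rightarrow> 'a \<Rightarrow> real) \<Rightarrow> (nat \<Rightarrow> 'a \<Rightarrow> 'b \<Rightarrow> real)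
    \<Rightarrow> (nat \<Rightarrow> 'b) \<Rightarrow> nat \<Rightarrow> nat \<Rightarrow> (nat \<Rightarrow> 'a) \<Rightarrow> 'a \<Rightarrow> real" where
  "pf_dens mu a b y N t xs =
     (let num = (\<lambda>x. ennreal (b t x (y t) * ((1 / real N) * (\<Sum>i<N. a t (xs i) x))))
      in (\<lambda>x. enn2real (num x) / enn2real (\<integral>\<^sup>+ x'. num x' \<partial>mu)))"

fun particles :: "'a measure \<Rightarrow> ('a \<Rightarrow> real) \<Rightarrow> (nat \<Rightarrow> 'a \<Rightarrow> 'a \<Rightarrow> real) \<Rightarrow> (nat \<Rightarrow> 'a \<Rightarrow> 'b \<Rightarrow> real)
    \<Rightarrow> (nat \<Rightarrow> 'b) \<Rightarrow> nat \<Rightarrow> nat \<Rightarrow> (nat \<Rightarrow> 'a) measure" where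
  "particles mu a0 a b y N 0 = PiM {..<N} (\<lambda>_. density mu (\<lambda>x. ennreal (a0 x)))"
| "particles mu a0 a b y N (Suc t) =
     bind (particles mu a0 a b y N t)
       (\<lambda>xs. PiM {..<N} (\<lambda>_. density mu (\<lambda>x. ennreal (pf_dens mu a b y N (Suc t) xs x))))"

definition gamma :: "'a measure \<Rightarrow> (nat \<Rightarrow> 'a \<Rightarrow> 'a \<Rightarrow> real) \<Rightarrow> (nat \<Rightarrow> 'a \<Rightarrow> 'b \<Rightarrow> real)
    \<Rightarrow> (nat \<Rightarrow> 'b) \<Rightarrow> nat \<Rightarrow> real" where
  "gamma mu a b y t = enn2real (SUP x. Lone mu a b y t x)"

definition kappa :: "'a measure \<Rightarrow> ('a \<Rightarrow> real) \<Rightarrow> (nat \<Rightarrow> 'a \<Rightarrow> 'a \<Rightarrow> real) \<Rightarrow> (nat \<Rightarrow> 'a \<Rightarrow> 'b \<Rightarrow> real)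
    \<Rightarrow> (nat \<Rightarrow> 'b) \<Rightarrow> nat \<Rightarrow> real" where
  "kappa mu a0 a b y t =
     enn2real (\<integral>\<^sup>+ x. Lone mu a b y t x * ennreal (filt mu a0 a b y (t - 1) x) \<partial>mu)"

fun alpha :: "nat \<Rightarrow> real" where
  "alpha 0 = 2"
| "alpha (Suc T) = 4 * max 1 (alpha T)"

fun beta :: "(nat \<Rightarrow> real) \<Rightarrow> (nat \<Rightarrow> real) \<Rightarrow> nat \<Rightarrow> real" where
  "beta g k 0 = 2"
| "beta g k (Suc T) = max 8 (16 * beta g k T * (g (Suc T))\<^sup>2 / (k (Suc T))\<^sup>2)"

end

theory Submission
  imports Defs
begin

(* By induction on T, with the first bound carried for all bounded test functions at once.
   For T = 0 the particles are i.i.d. with density a0 and the bound is Hoeffding's inequality.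
   For the step, the integral of psi against f^N_{T+1} is the quotient of the empirical means of
   L_{T+1} psi and L_{T+1} 1 over generation T, while m_{T+1}(psi) = m_T(L_{T+1} psi) / m_T(L_{T+1} 1)
   and m_T(L_{T+1} 1) = kappa_{T+1}. The induction hypothesis for L_{T+1} psi and L_{T+1} 1, which
   are bounded by gamma_{T+1} sup|psi| and gamma_{T+1}, and an elementary estimate for quotients
   give the second bound at T+1. Conditionally on generation T, generation T+1 is i.i.d. with
   density f^N_{T+1}, so Hoeffding's inequality controls the distance of its empirical mean from
   the integral of psi against f^N_{T+1}; splitting epsilon into halves gives the first bound. *)

section \<open>Densities, i.i.d. samples and random measures\<close>

definition prob_density :: "'a measure \<Rightarrow> ('a \<Rightarrow> real) \<Rightarrow> bool" where
  "prob_density M f \<longleftrightarrow>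
     f \<in> borel_measurable M \<and> (\<forall>x. 0 \<le> f x) \<and> (\<integral>\<^sup>+ x. ennreal (f x) \<partial>M) = 1"

lemma prob_space_density_prob_density:
  assumes "prob_density M f"
  shows "prob_space (density M (\<lambda>x. ennreal (f x)))"
proof -
  have "(\<integral>\<^sup>+ x. ennreal (f x) * indicator (space M) x \<partial>M) = (\<integral>\<^sup>+ x. ennreal (f x) \<partial>M)"
    by (rule nn_integral_cong) simp
  then have "emeasure (density M (\<lambda>x. ennreal (f x))) (space M) = 1"
    using assms unfolding prob_density_def by (simp add: emeasure_density)
  then show ?thesis by (intro prob_spaceI) simp
qed

lemma indep_vars_PiM_components:
  assumes M: "\<And>i. prob_space (M i)" and I: "finite I" "I \<noteq> {}"
  shows "prob_space.indep_vars (PiM I M) M (\<lambda>i \<omega>. \<omega> i) I"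
proof -
  interpret PP: product_prob_space M I by (intro product_prob_spaceI M)
  show ?thesis
  proof (subst PP.P.indep_vars_iff_distr_eq_PiM')
    have "distr (PiM I M) (PiM I M) (\<lambda>\<omega>. restrict \<omega> I) = distr (PiM I M) (PiM I M) (\<lambda>\<omega>. \<omega>)"
      by (intro distr_cong) (auto simp: space_PiM)
    also have "\<dots> = PiM I (\<lambda>i. distr (PiM I M) (M i) (\<lambda>\<omega>. \<omega> i))"
      using M by (auto intro!: PiM_cong simp: distr_PiM_component)
    finally show "distr (PiM I M) (PiM I M) (\<lambda>\<omega>. restrict \<omega> I)
        = PiM I (\<lambda>i. distr (PiM I M) (M i) (\<lambda>\<omega>. \<omega> i))" .
  qed (use I in auto)
qed

lemma integral_PiM_component:
  fixes f :: "'a \<Rightarrow> real"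
  assumes M: "\<And>i. prob_space (M i)" and i: "i \<in> I" and f: "f \<in> borel_measurable (M i)"
  shows "(\<integral>\<omega>. f (\<omega> i) \<partial>PiM I M) = (\<integral>x. f x \<partial>M i)"
proof -
  have "(\<integral>\<omega>. f (\<omega> i) \<partial>PiM I M) = integral\<^sup>L (distr (PiM I M) (M i) (\<lambda>\<omega>. \<omega> i)) f"
    using i f by (subst integral_distr) auto
  also have "distr (PiM I M) (M i) (\<lambda>\<omega>. \<omega> i) = M i"
    using M i by (rule distr_PiM_component)
  finally show ?thesis .
qed

lemma hoeffding_iid_mean:
  fixes psi :: "'a \<Rightarrow> real"
  assumes D: "prob_space D" and psi_measurable [measurable]: "psi \<in> borel_measurable D"
    and psi: "\<And>x. \<bar>psi x\<bar> \<le> S" and S: "0 < S" and N: "1 \<le> N" and \<epsilon>: "0 < \<epsilon>"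
  defines "P \<equiv> PiM {..<N} (\<lambda>_. D)"
  shows "measure P {z \<in> space P. \<epsilon> < \<bar>(\<Sum>i<N. psi (z i)) / real N - prob_space.expectation D psi\<bar>}
    \<le> 2 * exp (- (real N * \<epsilon>\<^sup>2) / (2 * S\<^sup>2))"
proof -
  interpret D: prob_space D by (rule D)
  interpret P: prob_space P unfolding P_def by (intro prob_space_PiM D)
  define m where "m = D.expectation psi"
  have "P.indep_vars (\<lambda>_. D) (\<lambda>i z. z i) {..<N}"
    unfolding P_def using N by (intro indep_vars_PiM_components D) (auto simp: lessThan_empty_iff)
  then have indep: "P.indep_vars (\<lambda>_. borel) (\<lambda>i z. psi (z i)) {..<N}"
    using P.indep_vars_compose2[of "\<lambda>_. D" _ _ "\<lambda>_. psi" "\<lambda>_. borel"] by simp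
  have expectation: "P.expectation (\<lambda>z. psi (z i)) = m" if "i < N" for i
    using that unfolding P_def m_def by (intro integral_PiM_component D) auto
  interpret H: Hoeffding_ineq P "{..<N}" "\<lambda>i z. psi (z i)" "\<lambda>_. -S" "\<lambda>_. S"
     "\<Sum>i<N. P.expectation (\<lambda>z. psi (z i))"
  proof unfold_locales
    show "AE z in P. psi (z i) \<in> {- S..S}" for i
      using psi by (intro AE_I2) (simp add: abs_le_iff minus_le_iff)
  qed (simp_all add: indep)
  have "{z \<in> space P. \<epsilon> < \<bar>(\<Sum>i<N. psi (z i)) / real N - m\<bar>}
      \<subseteq> {z \<in> space P. real N * \<epsilon> \<le> \<bar>(\<Sum>i<N. psi (z i)) - real N * m\<bar>}"
  proof safe
    fix z assume "\<epsilon> < \<bar>(\<Sum>i<N. psi (z i)) / real N - m\<bar>"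
    moreover have "(\<Sum>i<N. psi (z i)) / real N - m = ((\<Sum>i<N. psi (z i)) - real N * m) / real N"
      using N by (simp add: field_simps)
    ultimately show "real N * \<epsilon> \<le> \<bar>(\<Sum>i<N. psi (z i)) - real N * m\<bar>"
      using N by (simp add: abs_div field_simps)
  qed
  moreover have "{z \<in> space P. real N * \<epsilon> \<le> \<bar>(\<Sum>i<N. psi (z i)) - real N * m\<bar>} \<in> P.events"
    unfolding P_def by measurable
  ultimately have "P.prob {z \<in> space P. \<epsilon> < \<bar>(\<Sum>i<N. psi (z i)) / real N - m\<bar>}
      \<le> P.prob {z \<in> space P. real N * \<epsilon> \<le> \<bar>(\<Sum>i<N. psi (z i)) - real N * m\<bar>}"
    by (rule P.finite_measure_mono)
  also have "\<dots> \<le> 2 * exp (-2 * (real N * \<epsilon>)\<^sup>2 / (\<Sum>i<N. (S - - S)\<^sup>2))"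
    using H.Hoeffding_ineq_abs_ge[of "real N * \<epsilon>"] N \<epsilon> S expectation by simp
  also have "-2 * (real N * \<epsilon>)\<^sup>2 / (\<Sum>i<N. (S - - S)\<^sup>2) = - (real N * \<epsilon>\<^sup>2) / (2 * S\<^sup>2)"
    using N S by (simp add: power2_eq_square field_simps)
  finally show ?thesis unfolding m_def .
qed

lemma hoeffding_iid_density:
  fixes psi :: "'a \<Rightarrow> real"
  assumes g: "prob_density M g" and psi_measurable: "psi \<in> borel_measurable M"
    and psi: "\<And>x. \<bar>psi x\<bar> \<le> S" and S: "0 < S" and N: "1 \<le> N" and \<epsilon>: "0 < \<epsilon>"
  defines "P \<equiv> PiM {..<N} (\<lambda>_. density M (\<lambda>x. ennreal (g x)))"
  shows "measure P {z \<in> space P. \<epsilon> < \<bar>(\<Sum>i<N. psi (z i)) / real N - (\<integral>x. psi x * g x \<partial>M)\<bar>}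
    \<le> 2 * exp (- (real N * \<epsilon>\<^sup>2) / (2 * S\<^sup>2))"
proof -
  have "integral\<^sup>L (density M (\<lambda>x. ennreal (g x))) psi = (\<integral>x. psi x * g x \<partial>M)"
    using g psi_measurable unfolding prob_density_def
    by (subst integral_density) (auto simp: mult.commute)
  moreover have "psi \<in> borel_measurable (density M (\<lambda>x. ennreal (g x)))"
    using psi_measurable by simp
  ultimately show ?thesis
    using hoeffding_iid_mean[where psi=psi, OF prob_space_density_prob_density[OF g] _ psi S N \<epsilon>]
    unfolding P_def by simp
qed

lemma hoeffding_iid_density_around:
  fixes psi :: "'a \<Rightarrow> real"
  assumes g: "prob_density M g" and psi_measurable [measurable]: "psi \<in> borel_measurable M"
    and psi: "\<And>x. \<bar>psi x\<bar> \<le> S" and S: "0 < S" and N: "1 \<le> N" and \<epsilon>: "0 < \<epsilon>"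
    and close: "\<bar>(\<integral>x. psi x * g x \<partial>M) - c\<bar> \<le> \<epsilon> / 2"
  defines "P \<equiv> PiM {..<N} (\<lambda>_. density M (\<lambda>x. ennreal (g x)))"
  shows "measure P {z \<in> space (PiM {..<N} (\<lambda>_. M)). \<epsilon> < \<bar>(\<Sum>i<N. psi (z i)) / real N - c\<bar>}
    \<le> 2 * exp (- (real N * (\<epsilon> / 2)\<^sup>2) / (2 * S\<^sup>2))"
proof -
  interpret P: prob_space P
    unfolding P_def by (intro prob_space_PiM prob_space_density_prob_density g)
  let ?mean = "\<lambda>z. (\<Sum>i<N. psi (z i)) / real N"
  have sets_P: "sets P = sets (PiM {..<N} (\<lambda>_. M))"
    unfolding P_def by (intro sets_PiM_cong) auto
  then have space_P: "space P = space (PiM {..<N} (\<lambda>_. M))"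
    by (rule sets_eq_imp_space_eq)
  have "{z \<in> space (PiM {..<N} (\<lambda>_. M)). \<epsilon> < \<bar>?mean z - c\<bar>}
      \<subseteq> {z \<in> space P. \<epsilon> / 2 < \<bar>?mean z - (\<integral>x. psi x * g x \<partial>M)\<bar>}"
    unfolding space_P
  proof safe
    fix z assume "\<epsilon> < \<bar>?mean z - c\<bar>"
    then show "\<epsilon> / 2 < \<bar>?mean z - (\<integral>x. psi x * g x \<partial>M)\<bar>"
      using close abs_triangle_ineq4[of "?mean z - (\<integral>x. psi x * g x \<partial>M)" "c - (\<integral>x. psi x * g x \<partial>M)"]
      by (simp add: abs_minus_commute)
  qed
  moreover have "{z \<in> space P. \<epsilon> / 2 < \<bar>?mean z - (\<integral>x. psi x * g x \<partial>M)\<bar>} \<in> P.events"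
    unfolding sets_P space_P by measurable
  ultimately have "measure P {z \<in> space (PiM {..<N} (\<lambda>_. M)). \<epsilon> < \<bar>?mean z - c\<bar>}
      \<le> measure P {z \<in> space P. \<epsilon> / 2 < \<bar>?mean z - (\<integral>x. psi x * g x \<partial>M)\<bar>}"
    by (rule P.finite_measure_mono)
  also have "\<dots> \<le> 2 * exp (- (real N * (\<epsilon> / 2)\<^sup>2) / (2 * S\<^sup>2))"
    unfolding P_def using \<epsilon> by (intro hoeffding_iid_density[OF g psi_measurable psi S N]) simp
  finally show ?thesis .
qed

lemma prob_density_normalise:
  assumes f: "f \<in> borel_measurable M" and c: "(\<integral>\<^sup>+ x. f x \<partial>M) = ennreal c" "0 < c"
  shows "prob_density M (\<lambda>x. enn2real (f x) / enn2real (\<integral>\<^sup>+ x. f x \<partial>M))"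
proof -
  have "AE x in M. f x \<noteq> \<infinity>"
    using c by (intro nn_integral_PInf_AE f) simp
  then have "(\<integral>\<^sup>+ x. ennreal (enn2real (f x) / c) \<partial>M) = (\<integral>\<^sup>+ x. ennreal (1 / c) * f x \<partial>M)"
  proof (intro nn_integral_cong_AE, eventually_elim)
    case (elim x)
    have "ennreal (enn2real (f x) / c) = ennreal (1 / c) * ennreal (enn2real (f x))"
      using c(2) by (simp add: ennreal_mult[symmetric])
    then show ?case
      using elim by (simp add: ennreal_enn2real less_top)
  qed
  also have "\<dots> = 1"
    using c by (simp add: nn_integral_cmult f ennreal_mult'[symmetric])
  finally show ?thesis
    using f c unfolding prob_density_def by simp
qed

lemma nn_integral_weighted_prob_density:
  fixes g :: "'a \<Rightarrow> ennreal"
  assumes f: "prob_density M f" and g: "g \<in> borel_measurable M" "\<And>x. 0 < g x" "\<And>x. g x \<le> ennreal c"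
  shows "0 < (\<integral>\<^sup>+ x. g x * ennreal (f x) \<partial>M)" and "(\<integral>\<^sup>+ x. g x * ennreal (f x) \<partial>M) < \<top>"
proof -
  have [measurable]: "f \<in> borel_measurable M" and f_one: "(\<integral>\<^sup>+ x. ennreal (f x) \<partial>M) = 1"
    using f by (auto simp: prob_density_def)
  have "(\<integral>\<^sup>+ x. g x * ennreal (f x) \<partial>M) \<le> (\<integral>\<^sup>+ x. ennreal c * ennreal (f x) \<partial>M)"
    by (intro nn_integral_mono mult_right_mono g(3)) simp
  also have "\<dots> = ennreal c"
    by (simp add: nn_integral_cmult f_one)
  finally show "(\<integral>\<^sup>+ x. g x * ennreal (f x) \<partial>M) < \<top>"
    by (simp add: le_less_trans)
  show "0 < (\<integral>\<^sup>+ x. g x * ennreal (f x) \<partial>M)"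
  proof (rule ccontr)
    assume "\<not> ?thesis"
    then have "(\<integral>\<^sup>+ x. g x * ennreal (f x) \<partial>M) = 0"
      by (simp add: not_gr_zero)
    then have "AE x in M. g x * ennreal (f x) = 0"
      using g(1) by (subst (asm) nn_integral_0_iff_AE) auto
    then have "AE x in M. ennreal (f x) = 0"
      by eventually_elim (use g(2) in \<open>auto simp: less_le\<close>)
    then have "(\<integral>\<^sup>+ x. ennreal (f x) \<partial>M) = 0"
      by (simp add: nn_integral_0_iff_AE)
    with f_one show False by simp
  qed
qed

lemma measurable_PiM_density_kernel:
  fixes g :: "'c \<Rightarrow> 'a \<Rightarrow> real"
  assumes mu: "sigma_finite_measure mu" and I: "finite I"
    and g: "(\<lambda>(x, z). g x z) \<in> borel_measurable (M \<Otimes>\<^sub>M mu)"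
    and g_density: "\<And>x. x \<in> space M \<Longrightarrow> prob_density mu (g x)"
  shows "(\<lambda>x. PiM I (\<lambda>_. density mu (\<lambda>z. ennreal (g x z)))) \<in> M \<rightarrow>\<^sub>M prob_algebra (PiM I (\<lambda>_. mu))"
proof (rule measurable_prob_algebra_generated[OF sets_PiM Int_stable_prod_algebra prod_algebra_sets_into_space])
  interpret sigma_finite_measure mu by (rule mu)
  show "prob_space (PiM I (\<lambda>_. density mu (\<lambda>z. ennreal (g x z))))" if "x \<in> space M" for x
    by (intro prob_space_PiM prob_space_density_prob_density g_density that)
  show "sets (PiM I (\<lambda>_. density mu (\<lambda>z. ennreal (g x z)))) = sets (PiM I (\<lambda>_. mu))" for x
    by (intro sets_PiM_cong) auto
  fix A assume "A \<in> prod_algebra I (\<lambda>_. mu)"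
  then obtain X where A: "A = PiE I X" and X: "X \<in> (\<Pi> j\<in>I. sets mu)"
    unfolding prod_algebra_eq_finite[OF I] by auto
  have "(\<lambda>x. \<Prod>j\<in>I. \<integral>\<^sup>+ z. ennreal (g x z) * indicator (X j) z \<partial>mu) \<in> borel_measurable M"
  proof (intro borel_measurable_prod_ennreal)
    fix j assume "j \<in> I"
    then have [measurable]: "X j \<in> sets mu" using X by auto
    show "(\<lambda>x. \<integral>\<^sup>+ z. ennreal (g x z) * indicator (X j) z \<partial>mu) \<in> borel_measurable M"
      using g by measurable
  qed
  moreover have "emeasure (PiM I (\<lambda>_. density mu (\<lambda>z. ennreal (g x z)))) A =
        (\<Prod>j\<in>I. \<integral>\<^sup>+ z. ennreal (g x z) * indicator (X j) z \<partial>mu)" if x: "x \<in> space M" for x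
  proof -
    interpret PP: product_prob_space "\<lambda>_. density mu (\<lambda>z. ennreal (g x z))" I
      by (intro product_prob_spaceI prob_space_density_prob_density g_density x)
    show ?thesis unfolding A using X I g_density[OF x]
      by (subst PP.emeasure_PiM) (auto intro!: prod.cong emeasure_density simp: Pi_iff prob_density_def)
  qed
  ultimately show "(\<lambda>x. emeasure (PiM I (\<lambda>_. density mu (\<lambda>z. ennreal (g x z)))) A) \<in> borel_measurable M"
    by (subst measurable_cong) auto
qed

lemma measure_bind_le:
  assumes M: "M \<in> space (prob_algebra L)" and K: "K \<in> L \<rightarrow>\<^sub>M prob_algebra L'"
    and A: "A \<in> sets L'" and C: "C \<in> sets M" and e: "0 \<le> e"
    and bound: "\<And>x. x \<in> space M \<Longrightarrow> x \<notin> C \<Longrightarrow> measure (K x) A \<le> e"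
  shows "measure (M \<bind> K) A \<le> e + measure M C"
proof -
  interpret M: prob_space M using M by (simp add: space_prob_algebra)
  interpret MK: prob_space "M \<bind> K" by (rule prob_space_bind'[OF M K])
  have "sets M = sets L" using M by (simp add: space_prob_algebra)
  then have space_M: "space M = space L" by (rule sets_eq_imp_space_eq)
  have "emeasure (M \<bind> K) A = (\<integral>\<^sup>+ x. emeasure (K x) A \<partial>M)"
    by (rule emeasure_bind_prob_algebra[OF M K A])
  also have "\<dots> \<le> (\<integral>\<^sup>+ x. ennreal e + indicator C x \<partial>M)"
  proof (rule nn_integral_mono)
    fix x assume x: "x \<in> space M"
    interpret Kx: prob_space "K x"
      using measurable_space[OF K, of x] x space_M by (simp add: space_prob_algebra)
    show "emeasure (K x) A \<le> ennreal e + indicator C x"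
    proof (cases "x \<in> C")
      case True
      then show ?thesis using Kx.emeasure_le_1[of A] by (simp add: add_increasing)
    next
      case False
      then show ?thesis using bound[OF x] by (simp add: Kx.emeasure_eq_measure ennreal_leI)
    qed
  qed
  also have "\<dots> = ennreal e + emeasure M C"
    using C by (subst nn_integral_add) (auto simp: M.emeasure_space_1)
  also have "\<dots> = ennreal (e + measure M C)"
    using e by (simp add: M.emeasure_eq_measure ennreal_plus)
  finally have "ennreal (measure (M \<bind> K) A) \<le> ennreal (e + measure M C)"
    by (simp only: MK.emeasure_eq_measure)
  moreover have "0 \<le> e + measure M C" using e by simp
  ultimately show ?thesis by (simp only: ennreal_le_iff)
qed

lemma abs_divide_diff_le:
  fixes p q p' q' S d :: real
  assumes q: "0 < q" "0 < q'" and p': "\<bar>p'\<bar> \<le> S * q'" and S: "0 < S"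
    and p_close: "\<bar>p' - p\<bar> \<le> d * q / 2" and q_close: "\<bar>q' - q\<bar> \<le> d / S * q / 2"
  shows "\<bar>p' / q' - p / q\<bar> \<le> d"
proof -
  have "\<bar>p' / q'\<bar> * \<bar>q - q'\<bar> \<le> S * \<bar>q - q'\<bar>"
    using q p' by (intro mult_right_mono) (simp_all add: abs_div divide_le_eq)
  also have "\<dots> \<le> d * q / 2"
    using S q_close by (simp add: abs_minus_commute field_simps)
  finally have "\<bar>(p' / q') * (q - q')\<bar> \<le> d * q / 2"
    by (simp only: abs_mult)
  then have "\<bar>(p' / q') * (q - q') + (p' - p)\<bar> \<le> d * q"
    using abs_triangle_ineq[of "(p' / q') * (q - q')" "p' - p"] p_close by linarith
  moreover have "p' / q' - p / q = ((p' / q') * (q - q') + (p' - p)) / q"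
    using q by (simp add: field_simps)
  ultimately show ?thesis using q by (simp add: abs_div divide_le_eq)
qed

lemma exp_neg_divide_mono:
  fixes c p q :: real
  assumes "0 \<le> c" "0 < p" "p \<le> q"
  shows "exp (- c / p) \<le> exp (- c / q)"
  using assms by (simp add: divide_left_mono)

lemma abs_le_SUP_abs:
  fixes psi :: "'a \<Rightarrow> real"
  assumes "bounded (range psi)"
  shows "\<bar>psi x\<bar> \<le> (SUP x. \<bar>psi x\<bar>)"
proof (rule cSUP_upper)
  obtain B where "\<And>x. \<bar>psi x\<bar> \<le> B"
    using assms unfolding bounded_iff by auto
  then show "bdd_above (range (\<lambda>x. \<bar>psi x\<bar>))"
    by (intro bdd_aboveI2) auto
qed simp

lemma alpha_ge_two: "2 \<le> alpha T"
  by (induction T) auto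

lemma beta_ge_two: "2 \<le> beta g k T"
  by (induction T) auto

section \<open>The filter and the particle filter\<close>

(* The observation density b enters only through the likelihoods x \<mapsto> b t x (y t) of the
   fixed observations; times t \<ge> 1 are written Suc t. *)
locale hmm_filter =
  fixes mu :: "'a measure" and a0 :: "'a \<Rightarrow> real" and a :: "nat \<Rightarrow> 'a \<Rightarrow> 'a \<Rightarrow> real"
    and b :: "nat \<Rightarrow> 'a \<Rightarrow> 'b \<Rightarrow> real" and y :: "nat \<Rightarrow> 'b"
  assumes sigma_finite_mu: "sigma_finite_measure mu" and space_mu [simp]: "space mu = UNIV"
    and a0_density: "prob_density mu a0"
    and a_measurable [measurable]: "\<And>t. (\<lambda>(x, x'). a (Suc t) x x') \<in> borel_measurable (mu \<Otimes>\<^sub>M mu)"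
    and a_nonneg [simp]: "\<And>t x x'. 0 \<le> a (Suc t) x x'"
    and likelihood_measurable [measurable]: "\<And>t. (\<lambda>x. b (Suc t) x (y (Suc t))) \<in> borel_measurable mu"
    and likelihood_nonneg [simp]: "\<And>t x. 0 \<le> b (Suc t) x (y (Suc t))"
    and Lone_bounded: "\<And>t. (SUP x. Lone mu a b y (Suc t) x) < \<top>"
    and Lone_pos: "\<And>t x. 0 < Lone mu a b y (Suc t) x"
begin

sublocale MM: pair_sigma_finite mu mu
  using sigma_finite_mu by (simp add: pair_sigma_finite_def)

abbreviation "F \<equiv> filt mu a0 a b y"
abbreviation "m \<equiv> mfilt mu a0 a b y"
abbreviation "\<gamma> \<equiv> gamma mu a b y"
abbreviation "\<kappa> \<equiv> kappa mu a0 a b y"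
abbreviation "\<beta> \<equiv> beta \<gamma> \<kappa>"

definition L :: "nat \<Rightarrow> ('a \<Rightarrow> real) \<Rightarrow> 'a \<Rightarrow> real" where
  "L t psi x = (\<integral>u. a t x u * b t u (y t) * psi u \<partial>mu)"

abbreviation "L1 t \<equiv> L t (\<lambda>_. 1)"

lemma measurable_Lone [measurable]: "Lone mu a b y (Suc t) \<in> borel_measurable mu"
  unfolding Lone_def[abs_def] by measurable

lemma Lone_le_SUP: "Lone mu a b y (Suc t) x \<le> (SUP x. Lone mu a b y (Suc t) x)"
  by (rule SUP_upper) simp

lemma Lone_less_top: "Lone mu a b y (Suc t) x < \<top>"
  using Lone_le_SUP Lone_bounded by (rule le_less_trans)

lemma Lone_eq_L1: "Lone mu a b y (Suc t) x = ennreal (L1 (Suc t) x)"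
proof -
  have "L1 (Suc t) x = enn2real (Lone mu a b y (Suc t) x)"
    unfolding L_def Lone_def by (subst integral_eq_nn_integral) auto
  then show ?thesis using Lone_less_top by (simp add: ennreal_enn2real less_top)
qed

lemma L1_pos: "0 < L1 (Suc t) x"
  using Lone_pos[of t x] by (simp add: Lone_eq_L1)

lemma gamma_Suc: "ennreal (\<gamma> (Suc t)) = (SUP x. Lone mu a b y (Suc t) x)"
  unfolding gamma_def using Lone_bounded by (simp add: ennreal_enn2real less_top)

lemma Lone_le_gamma: "Lone mu a b y (Suc t) x \<le> ennreal (\<gamma> (Suc t))"
  unfolding gamma_Suc by (rule Lone_le_SUP)

lemma L1_le_gamma: "L1 (Suc t) x \<le> \<gamma> (Suc t)"
proof -
  have "ennreal (L1 (Suc t) x) \<le> ennreal (\<gamma> (Suc t))"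
    using Lone_le_gamma[of t x] by (simp only: Lone_eq_L1)
  then show ?thesis by (simp add: ennreal_le_iff gamma_def)
qed

lemma gamma_pos: "0 < \<gamma> (Suc t)"
  using L1_pos L1_le_gamma by (rule less_le_trans)

lemma measurable_L [measurable]:
  assumes [measurable]: "psi \<in> borel_measurable mu"
  shows "L (Suc t) psi \<in> borel_measurable mu"
  unfolding L_def[abs_def] by measurable

lemma abs_L_integrand_le:
  assumes "\<bar>psi u\<bar> \<le> S"
  shows "\<bar>a (Suc t) x u * b (Suc t) u (y (Suc t)) * psi u\<bar>
    \<le> S * (a (Suc t) x u * b (Suc t) u (y (Suc t)))"
  using mult_left_mono[OF assms, of "a (Suc t) x u * b (Suc t) u (y (Suc t))"]
  by (simp add: abs_mult mult.commute)

lemma integrable_L1_integrand: "integrable mu (\<lambda>u. a (Suc t) x u * b (Suc t) u (y (Suc t)))"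
  using Lone_eq_L1[of t x] unfolding Lone_def by (intro integrableI_nn_integral_finite) auto

lemma integrable_L_integrand:
  assumes [measurable]: "psi \<in> borel_measurable mu" and psi: "\<And>x. \<bar>psi x\<bar> \<le> S"
  shows "integrable mu (\<lambda>u. a (Suc t) x u * b (Suc t) u (y (Suc t)) * psi u)"
proof (rule Bochner_Integration.integrable_bound)
  show "integrable mu (\<lambda>u. S * (a (Suc t) x u * b (Suc t) u (y (Suc t))))"
    using integrable_L1_integrand by simp
  show "AE u in mu. norm (a (Suc t) x u * b (Suc t) u (y (Suc t)) * psi u)
      \<le> norm (S * (a (Suc t) x u * b (Suc t) u (y (Suc t))))"
    unfolding real_norm_def by (intro AE_I2 order_trans[OF abs_L_integrand_le[OF psi] abs_ge_self])
qed measurable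

lemma abs_L_le:
  assumes [measurable]: "psi \<in> borel_measurable mu" and psi: "\<And>x. \<bar>psi x\<bar> \<le> S"
  shows "\<bar>L (Suc t) psi x\<bar> \<le> S * L1 (Suc t) x"
proof -
  have "\<bar>L (Suc t) psi x\<bar> \<le> (\<integral>u. \<bar>a (Suc t) x u * b (Suc t) u (y (Suc t)) * psi u\<bar> \<partial>mu)"
    unfolding L_def by (rule integral_abs_bound)
  also have "\<dots> \<le> (\<integral>u. S * (a (Suc t) x u * b (Suc t) u (y (Suc t)) * 1) \<partial>mu)"
    using integrable_L_integrand[OF assms] integrable_L1_integrand
    by (intro integral_mono integrable_abs integrable_mult_right) (auto intro: abs_L_integrand_le psi)
  also have "\<dots> = S * L1 (Suc t) x"
    unfolding L_def by simp
  finally show ?thesis .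
qed

lemma filt_transition_nn_integral:
  assumes "prob_density mu (F t)"
  shows "(\<integral>\<^sup>+ u. \<integral>\<^sup>+ x. ennreal (F t u * (a (Suc t) u x * b (Suc t) x (y (Suc t)))) \<partial>mu \<partial>mu)
      = ennreal (\<kappa> (Suc t))"
    and "0 < \<kappa> (Suc t)"
proof -
  define I where "I = (\<integral>\<^sup>+ u. Lone mu a b y (Suc t) u * ennreal (F t u) \<partial>mu)"
  have "0 < I" and finite: "I < \<top>"
    unfolding I_def using nn_integral_weighted_prob_density[OF assms measurable_Lone Lone_pos Lone_le_gamma]
    by auto
  moreover have kappa: "\<kappa> (Suc t) = enn2real I"
    unfolding kappa_def I_def by simp
  ultimately show "0 < \<kappa> (Suc t)"
    by (simp add: enn2real_positive_iff less_top)
  have "F t x \<ge> 0" for x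
    using assms by (simp add: prob_density_def)
  then have "(\<integral>\<^sup>+ u. \<integral>\<^sup>+ x. ennreal (F t u * (a (Suc t) u x * b (Suc t) x (y (Suc t)))) \<partial>mu \<partial>mu) = I"
    unfolding I_def Lone_def
    by (intro nn_integral_cong, subst nn_integral_multc[symmetric])
       (auto intro!: nn_integral_cong simp: ennreal_mult'[symmetric] mult_ac)
  then show "(\<integral>\<^sup>+ u. \<integral>\<^sup>+ x. ennreal (F t u * (a (Suc t) u x * b (Suc t) x (y (Suc t)))) \<partial>mu \<partial>mu)
      = ennreal (\<kappa> (Suc t))"
    unfolding kappa using finite by (simp add: ennreal_enn2real)
qed

lemma filt_normaliser:
  assumes F: "prob_density mu (F t)"
  shows "(\<integral>\<^sup>+ x. ennreal (b (Suc t) x (y (Suc t))) * (\<integral>\<^sup>+ u. ennreal (F t u * a (Suc t) u x) \<partial>mu) \<partial>mu)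
      = ennreal (\<kappa> (Suc t))"
proof -
  have [measurable]: "F t \<in> borel_measurable mu" and F_nonneg: "\<And>x. 0 \<le> F t x"
    using F by (auto simp: prob_density_def)
  have "(\<integral>\<^sup>+ x. ennreal (b (Suc t) x (y (Suc t))) * (\<integral>\<^sup>+ u. ennreal (F t u * a (Suc t) u x) \<partial>mu) \<partial>mu)
      = (\<integral>\<^sup>+ x. \<integral>\<^sup>+ u. ennreal (F t u * (a (Suc t) u x * b (Suc t) x (y (Suc t)))) \<partial>mu \<partial>mu)"
    by (intro nn_integral_cong, subst nn_integral_cmult[symmetric])
       (auto intro!: nn_integral_cong simp: ennreal_mult'[symmetric] F_nonneg mult_ac)
  also have "\<dots> = (\<integral>\<^sup>+ u. \<integral>\<^sup>+ x. ennreal (F t u * (a (Suc t) u x * b (Suc t) x (y (Suc t)))) \<partial>mu \<partial>mu)"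
    by (rule MM.Fubini') measurable
  finally show ?thesis
    unfolding filt_transition_nn_integral(1)[OF F] .
qed

lemma prob_density_filt: "prob_density mu (F t)"
proof (induction t)
  case 0
  show ?case using a0_density by simp
next
  case (Suc t)
  then have [measurable]: "F t \<in> borel_measurable mu"
    by (simp add: prob_density_def)
  show ?case
    unfolding filt.simps Let_def
    by (rule prob_density_normalise[OF _ filt_normaliser[OF Suc] filt_transition_nn_integral(2)[OF Suc]])
       measurable
qed

lemma measurable_filt [measurable]: "F t \<in> borel_measurable mu"
  and filt_nonneg [simp]: "0 \<le> F t x"
  using prob_density_filt[of t] by (auto simp: prob_density_def)

lemma kappa_pos: "0 < \<kappa> (Suc t)"
  using filt_transition_nn_integral(2)[OF prob_density_filt] .

lemma filt_Suc_eq: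
  "F (Suc t) x = b (Suc t) x (y (Suc t)) * (\<integral>u. F t u * a (Suc t) u x \<partial>mu) / \<kappa> (Suc t)"
proof -
  have "enn2real (\<integral>\<^sup>+ u. ennreal (F t u * a (Suc t) u x) \<partial>mu) = (\<integral>u. F t u * a (Suc t) u x \<partial>mu)"
    by (subst integral_eq_nn_integral) auto
  then show ?thesis
    using filt_normaliser[OF prob_density_filt[of t]] kappa_pos[of t]
    by (simp add: Let_def enn2real_mult)
qed

declare filt.simps(2) [simp del]

lemma kappa_eq_mfilt: "\<kappa> (Suc t) = m t (L1 (Suc t))"
  unfolding kappa_def mfilt_def Lone_eq_L1
  by (subst integral_eq_nn_integral)
     (auto intro!: arg_cong[where f=enn2real] nn_integral_cong
       simp: ennreal_mult'[symmetric] L1_pos less_imp_le mult.commute)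

lemma integrable_mult_filt:
  assumes [measurable]: "psi \<in> borel_measurable mu" and psi: "\<And>x. \<bar>psi x\<bar> \<le> S"
  shows "integrable mu (\<lambda>x. psi x * F t x)"
proof (rule Bochner_Integration.integrable_bound)
  show "integrable mu (\<lambda>x. S * F t x)"
    using prob_density_filt[of t] unfolding prob_density_def
    by (intro integrable_mult_right integrableI_nn_integral_finite[where x=1]) auto
  show "AE x in mu. norm (psi x * F t x) \<le> norm (S * F t x)"
    using psi by (intro AE_I2) (auto simp: abs_mult intro!: mult_right_mono order_trans[OF _ abs_ge_self])
qed measurable

lemma integrable_filt_transition:
  "integrable (mu \<Otimes>\<^sub>M mu) (\<lambda>(u, x). F t u * (a (Suc t) u x * b (Suc t) x (y (Suc t))))"
proof (rule integrableI_nn_integral_finite)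
  show "(\<integral>\<^sup>+ p. ennreal (case p of (u, x) \<Rightarrow> F t u * (a (Suc t) u x * b (Suc t) x (y (Suc t))))
      \<partial>(mu \<Otimes>\<^sub>M mu)) = ennreal (\<kappa> (Suc t))"
    by (subst MM.M1.nn_integral_fst[symmetric])
       (simp_all add: filt_transition_nn_integral(1)[OF prob_density_filt])
qed auto

lemma mfilt_Suc:
  assumes [measurable]: "psi \<in> borel_measurable mu" and psi: "\<And>x. \<bar>psi x\<bar> \<le> S"
  shows "m (Suc t) psi = m t (L (Suc t) psi) / \<kappa> (Suc t)"
proof -
  define f where "f u x = psi x * (F t u * (a (Suc t) u x * b (Suc t) x (y (Suc t))))" for u x
  have integrable: "integrable (mu \<Otimes>\<^sub>M mu) (\<lambda>(u, x). f u x)"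
  proof (rule Bochner_Integration.integrable_bound)
    show "integrable (mu \<Otimes>\<^sub>M mu) (\<lambda>p. S * (case p of (u, x) \<Rightarrow> F t u * (a (Suc t) u x * b (Suc t) x (y (Suc t)))))"
      by (intro integrable_mult_right integrable_filt_transition)
    show "AE p in mu \<Otimes>\<^sub>M mu. norm (case p of (u, x) \<Rightarrow> f u x)
        \<le> norm (S * (case p of (u, x) \<Rightarrow> F t u * (a (Suc t) u x * b (Suc t) x (y (Suc t)))))"
      using psi by (intro AE_I2) (auto simp: f_def abs_mult intro!: mult_right_mono order_trans[OF _ abs_ge_self])
  qed (simp add: f_def)
  have inner: "(\<integral>u. f u x \<partial>mu) = \<kappa> (Suc t) * (psi x * F (Suc t) x)" for x
  proof -
    have "(\<integral>u. f u x \<partial>mu) = psi x * b (Suc t) x (y (Suc t)) * (\<integral>u. F t u * a (Suc t) u x \<partial>mu)"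
      unfolding f_def by (simp add: integral_mult_right_zero[symmetric] mult_ac del: integral_mult_right_zero)
    then show ?thesis
      using kappa_pos[of t] by (simp add: filt_Suc_eq)
  qed
  have outer: "(\<integral>x. f u x \<partial>mu) = F t u * L (Suc t) psi u" for u
    unfolding f_def L_def by (simp add: integral_mult_right_zero[symmetric] mult_ac del: integral_mult_right_zero)
  have "\<kappa> (Suc t) * m (Suc t) psi = (\<integral>x. \<integral>u. f u x \<partial>mu \<partial>mu)"
    by (simp add: mfilt_def inner)
  also have "\<dots> = (\<integral>u. \<integral>x. f u x \<partial>mu \<partial>mu)"
    by (rule MM.Fubini_integral[OF integrable])
  also have "\<dots> = m t (L (Suc t) psi)"
    by (simp add: mfilt_def outer mult.commute)
  finally show ?thesis
    using kappa_pos[of t] by (simp add: field_simps)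
qed

lemma pf_dens_eq:
  assumes N: "1 \<le> N"
  shows "pf_dens mu a b y N (Suc t) xs x =
     b (Suc t) x (y (Suc t)) * (\<Sum>i<N. a (Suc t) (xs i) x) / (\<Sum>i<N. L1 (Suc t) (xs i))"
proof -
  define h where "h x = b (Suc t) x (y (Suc t)) * ((1 / real N) * (\<Sum>i<N. a (Suc t) (xs i) x))" for x
  have h_nonneg: "0 \<le> h x" for x
    unfolding h_def by (intro mult_nonneg_nonneg sum_nonneg) auto
  have [measurable]: "h \<in> borel_measurable mu"
    unfolding h_def[abs_def] by measurable
  have "enn2real (\<integral>\<^sup>+ x. ennreal (h x) \<partial>mu) = (\<integral>x. h x \<partial>mu)"
    using h_nonneg by (subst integral_eq_nn_integral) auto
  also have "\<dots> = (1 / real N) * (\<Sum>i<N. L1 (Suc t) (xs i))"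
    unfolding h_def L_def
    by (simp add: sum_distrib_left sum_distrib_right Bochner_Integration.integral_sum
        integrable_L1_integrand mult_ac del: integral_sum')
  finally have "pf_dens mu a b y N (Suc t) xs x = h x / ((1 / real N) * (\<Sum>i<N. L1 (Suc t) (xs i)))"
    unfolding pf_dens_def Let_def h_def[symmetric] using h_nonneg by simp
  then show ?thesis
    unfolding h_def using N by (simp add: field_simps)
qed

lemma sum_L1_pos: "1 \<le> (N::nat) \<Longrightarrow> 0 < (\<Sum>i<N. L1 (Suc t) (xs i))"
  by (intro sum_pos L1_pos) (auto simp: lessThan_empty_iff)

lemma measurable_pf_dens [measurable]:
  "1 \<le> N \<Longrightarrow> (\<lambda>(xs, x). pf_dens mu a b y N (Suc t) xs x) \<in> borel_measurable (PiM {..<N} (\<lambda>_. mu) \<Otimes>\<^sub>M mu)"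
  by (simp only: pf_dens_eq) measurable

lemma measurable_pf_dens_component [measurable]:
  assumes "1 \<le> N"
  shows "pf_dens mu a b y N (Suc t) xs \<in> borel_measurable mu"
  unfolding pf_dens_eq[OF assms] by measurable

lemma integral_mult_pf_dens:
  assumes N: "1 \<le> N" and [measurable]: "psi \<in> borel_measurable mu" and psi: "\<And>x. \<bar>psi x\<bar> \<le> S"
  shows "integrable mu (\<lambda>x. psi x * pf_dens mu a b y N (Suc t) xs x)"
    and "(\<integral>x. psi x * pf_dens mu a b y N (Suc t) xs x \<partial>mu) =
          (\<Sum>i<N. L (Suc t) psi (xs i)) / (\<Sum>i<N. L1 (Suc t) (xs i))"
proof -
  have eq: "psi x * pf_dens mu a b y N (Suc t) xs x =
     (\<Sum>i<N. a (Suc t) (xs i) x * b (Suc t) x (y (Suc t)) * psi x) / (\<Sum>i<N. L1 (Suc t) (xs i))" for x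
    unfolding pf_dens_eq[OF N] by (simp add: sum_distrib_left mult_ac)
  have integrable: "integrable mu (\<lambda>x. a (Suc t) (xs i) x * b (Suc t) x (y (Suc t)) * psi x)" for i
    by (rule integrable_L_integrand[OF _ psi]) simp
  show "integrable mu (\<lambda>x. psi x * pf_dens mu a b y N (Suc t) xs x)"
    unfolding eq by (intro integrable_divide Bochner_Integration.integrable_sum integrable)
  show "(\<integral>x. psi x * pf_dens mu a b y N (Suc t) xs x \<partial>mu) =
          (\<Sum>i<N. L (Suc t) psi (xs i)) / (\<Sum>i<N. L1 (Suc t) (xs i))"
    unfolding eq L_def by (simp add: Bochner_Integration.integral_sum integrable del: integral_sum')
qed

lemma prob_density_pf_dens:
  assumes N: "1 \<le> N"
  shows "prob_density mu (pf_dens mu a b y N (Suc t) xs)"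
proof -
  have nonneg: "0 \<le> pf_dens mu a b y N (Suc t) xs x" for x
    unfolding pf_dens_eq[OF N] using sum_L1_pos[OF N] by (intro divide_nonneg_pos mult_nonneg_nonneg sum_nonneg) auto
  have "(\<integral>x. 1 * pf_dens mu a b y N (Suc t) xs x \<partial>mu) = 1"
    using integral_mult_pf_dens(2)[OF N, of "\<lambda>_. 1" 1] sum_L1_pos[OF N, of t xs] by simp
  then have "(\<integral>\<^sup>+ x. ennreal (pf_dens mu a b y N (Suc t) xs x) \<partial>mu) = 1"
    using integral_mult_pf_dens(1)[OF N, of "\<lambda>_. 1" 1] nonneg
    by (subst nn_integral_eq_integral) auto
  then show ?thesis
    using nonneg N unfolding prob_density_def by (simp add: pf_dens_eq)
qed

abbreviation "X N T \<equiv> particles mu a0 a b y N T"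

lemma measurable_pf_kernel:
  assumes "1 \<le> N"
  shows "(\<lambda>xs. PiM {..<N} (\<lambda>_. density mu (\<lambda>x. ennreal (pf_dens mu a b y N (Suc t) xs x))))
    \<in> PiM {..<N} (\<lambda>_. mu) \<rightarrow>\<^sub>M prob_algebra (PiM {..<N} (\<lambda>_. mu))"
  using assms by (intro measurable_PiM_density_kernel sigma_finite_mu measurable_pf_dens prob_density_pf_dens) auto

lemma particles_in_prob_algebra:
  assumes N: "1 \<le> N"
  shows "X N T \<in> space (prob_algebra (PiM {..<N} (\<lambda>_. mu)))"
proof (induction T)
  case 0
  have "prob_space (X N 0)"
    using a0_density by (simp add: prob_space_PiM prob_space_density_prob_density)
  moreover have "sets (X N 0) = sets (PiM {..<N} (\<lambda>_. mu))"
    by (simp, intro sets_PiM_cong) auto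
  ultimately show ?case by (simp add: space_prob_algebra)
next
  case (Suc T)
  then show ?case
    using measurable_pf_kernel[OF N, of T]
    by (simp add: space_prob_algebra prob_space_bind' sets_bind' del: particles.simps(1))
qed

lemma prob_space_particles: "1 \<le> N \<Longrightarrow> prob_space (X N T)"
  and sets_particles: "1 \<le> N \<Longrightarrow> sets (X N T) = sets (PiM {..<N} (\<lambda>_. mu))"
  using particles_in_prob_algebra by (simp_all add: space_prob_algebra)

lemma space_particles: "1 \<le> N \<Longrightarrow> space (X N T) = space (PiM {..<N} (\<lambda>_. mu))"
  using sets_particles by (rule sets_eq_imp_space_eq)

section \<open>Concentration of the particle filter\<close>

(* Quantified over all bounded test functions, since the induction step applies it at time t
   to L (Suc t) psi and L1 (Suc t). *)
definition particle_concentration :: "nat \<Rightarrow> nat \<Rightarrow> bool" where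
  "particle_concentration N T \<longleftrightarrow>
     (\<forall>psi S \<epsilon>. psi \<in> borel_measurable mu \<longrightarrow> (\<forall>x. \<bar>psi x\<bar> \<le> S) \<longrightarrow> 0 < S \<longrightarrow> 0 < \<epsilon> \<longrightarrow>
        measure (X N T) {xs \<in> space (X N T). \<epsilon> < \<bar>(\<Sum>i<N. psi (xs i)) / real N - m T psi\<bar>}
          \<le> alpha T * exp (- (real N * \<epsilon>\<^sup>2) / (\<beta> T * S\<^sup>2)))"

lemma particle_concentrationD:
  assumes "particle_concentration N T" and "psi \<in> borel_measurable mu" "\<And>x. \<bar>psi x\<bar> \<le> S"
    and "0 < S" "0 < \<epsilon>"
  shows "measure (X N T) {xs \<in> space (X N T). \<epsilon> < \<bar>(\<Sum>i<N. psi (xs i)) / real N - m T psi\<bar>}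
    \<le> alpha T * exp (- (real N * \<epsilon>\<^sup>2) / (\<beta> T * S\<^sup>2))"
  using assms unfolding particle_concentration_def by blast

definition \<delta> :: "nat \<Rightarrow> real" where
  "\<delta> t = 4 * \<beta> t * (\<gamma> (Suc t))\<^sup>2 / (\<kappa> (Suc t))\<^sup>2"

lemma beta_Suc_eq: "\<beta> (Suc t) = max 8 (4 * \<delta> t)"
  by (simp add: \<delta>_def)

lemma delta_pos: "0 < \<delta> t"
  using beta_ge_two[of \<gamma> \<kappa> t] gamma_pos[of t] kappa_pos[of t] by (simp add: \<delta>_def)

lemma particle_concentration_0:
  assumes "1 \<le> N"
  shows "particle_concentration N 0"
  unfolding particle_concentration_def
proof (intro allI impI)
  fix psi :: "'a \<Rightarrow> real" and S \<epsilon> :: real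
  assume "psi \<in> borel_measurable mu" "\<forall>x. \<bar>psi x\<bar> \<le> S" "0 < S" "0 < \<epsilon>"
  with hoeffding_iid_density[OF a0_density, of psi S N \<epsilon>] assms
  show "measure (X N 0) {xs \<in> space (X N 0). \<epsilon> < \<bar>(\<Sum>i<N. psi (xs i)) / real N - m 0 psi\<bar>}
      \<le> alpha 0 * exp (- (real N * \<epsilon>\<^sup>2) / (\<beta> 0 * S\<^sup>2))"
    by (simp add: mfilt_def)
qed

lemma integral_mult_pf_dens_diff_filt:
  assumes N: "1 \<le> N" and [measurable]: "psi \<in> borel_measurable mu" and psi: "\<And>x. \<bar>psi x\<bar> \<le> S"
  shows "(\<integral>x. psi x * (pf_dens mu a b y N (Suc t) xs x - F (Suc t) x) \<partial>mu)
    = (\<Sum>i<N. L (Suc t) psi (xs i)) / (\<Sum>i<N. L1 (Suc t) (xs i)) - m (Suc t) psi"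
  using integral_mult_pf_dens[OF N _ psi] integrable_mult_filt[OF _ psi]
  by (simp add: right_diff_distrib mfilt_def)

lemma pf_deviation_event:
  assumes N: "1 \<le> N" and psi_measurable [measurable]: "psi \<in> borel_measurable mu"
    and psi: "\<And>x. \<bar>psi x\<bar> \<le> S"
  shows "{xs \<in> space (X N t). \<epsilon> < \<bar>\<integral>x. psi x * (pf_dens mu a b y N (Suc t) xs x - F (Suc t) x) \<partial>mu\<bar>}
    \<in> sets (X N t)"
  unfolding integral_mult_pf_dens_diff_filt[OF N psi_measurable psi] sets_particles[OF N] space_particles[OF N]
  by measurable

lemma pf_deviation_split:
  assumes N: "1 \<le> N" and [measurable]: "psi \<in> borel_measurable mu"
    and psi: "\<And>x. \<bar>psi x\<bar> \<le> S" and S: "0 < S"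
    and deviation: "d < \<bar>(\<Sum>i<N. L (Suc t) psi (xs i)) / (\<Sum>i<N. L1 (Suc t) (xs i)) - m (Suc t) psi\<bar>"
  shows "d * \<kappa> (Suc t) / 2 < \<bar>(\<Sum>i<N. L (Suc t) psi (xs i)) / real N - m t (L (Suc t) psi)\<bar>
    \<or> d / S * \<kappa> (Suc t) / 2 < \<bar>(\<Sum>i<N. L1 (Suc t) (xs i)) / real N - m t (L1 (Suc t))\<bar>"
proof (rule ccontr)
  define p' where "p' = (\<Sum>i<N. L (Suc t) psi (xs i)) / real N"
  define q' where "q' = (\<Sum>i<N. L1 (Suc t) (xs i)) / real N"
  assume "\<not> ?thesis"
  then have "\<bar>p' - m t (L (Suc t) psi)\<bar> \<le> d * \<kappa> (Suc t) / 2"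
    and "\<bar>q' - \<kappa> (Suc t)\<bar> \<le> d / S * \<kappa> (Suc t) / 2"
    by (auto simp: p'_def q'_def kappa_eq_mfilt)
  moreover have "0 < q'"
    using sum_L1_pos[OF N] N by (simp add: q'_def)
  moreover have "\<bar>p'\<bar> \<le> S * q'"
  proof -
    have "\<bar>\<Sum>i<N. L (Suc t) psi (xs i)\<bar> \<le> (\<Sum>i<N. S * L1 (Suc t) (xs i))"
      by (rule order_trans[OF sum_abs sum_mono]) (rule abs_L_le[OF _ psi], simp)
    then show ?thesis
      using N by (simp add: p'_def q'_def sum_distrib_left[symmetric] abs_div divide_le_eq)
  qed
  ultimately have "\<bar>p' / q' - m t (L (Suc t) psi) / \<kappa> (Suc t)\<bar> \<le> d"
    using kappa_pos S by (intro abs_divide_diff_le) auto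
  moreover have "p' / q' = (\<Sum>i<N. L (Suc t) psi (xs i)) / (\<Sum>i<N. L1 (Suc t) (xs i))"
    using N by (simp add: p'_def q'_def)
  ultimately show False
    using deviation mfilt_Suc[OF _ psi] by simp
qed

lemma L_mean_deviation_le:
  assumes N: "1 \<le> N" and IH: "particle_concentration N t"
    and [measurable]: "psi \<in> borel_measurable mu" and psi: "\<And>x. \<bar>psi x\<bar> \<le> S" and S: "0 < S"
    and \<epsilon>: "0 < \<epsilon>"
  shows "measure (X N t) {xs \<in> space (X N t).
      \<epsilon> * \<kappa> (Suc t) / 2 < \<bar>(\<Sum>i<N. L (Suc t) psi (xs i)) / real N - m t (L (Suc t) psi)\<bar>}
    \<le> alpha t * exp (- (real N * \<epsilon>\<^sup>2) / (\<delta> t * S\<^sup>2))"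
proof -
  have g: "0 < \<gamma> (Suc t)" and k: "0 < \<kappa> (Suc t)" and bt: "0 < \<beta> t"
    using gamma_pos kappa_pos beta_ge_two[of \<gamma> \<kappa> t] by auto
  have "\<bar>L (Suc t) psi x\<bar> \<le> S * \<gamma> (Suc t)" for x
    using order_trans[OF abs_L_le[of psi S t x, OF _ psi] mult_left_mono[OF L1_le_gamma[of t x]]] S
    by simp
  then have "measure (X N t) {xs \<in> space (X N t).
      \<epsilon> * \<kappa> (Suc t) / 2 < \<bar>(\<Sum>i<N. L (Suc t) psi (xs i)) / real N - m t (L (Suc t) psi)\<bar>}
    \<le> alpha t * exp (- (real N * (\<epsilon> * \<kappa> (Suc t) / 2)\<^sup>2) / (\<beta> t * (S * \<gamma> (Suc t))\<^sup>2))"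
    using S g k \<epsilon> by (intro particle_concentrationD[OF IH]) auto
  also have "- (real N * (\<epsilon> * \<kappa> (Suc t) / 2)\<^sup>2) / (\<beta> t * (S * \<gamma> (Suc t))\<^sup>2)
      = - (real N * \<epsilon>\<^sup>2) / (\<delta> t * S\<^sup>2)"
    using S g k bt by (simp add: \<delta>_def field_simps power2_eq_square)
  finally show ?thesis .
qed

lemma pf_deviation_le:
  assumes N: "1 \<le> N" and IH: "particle_concentration N t"
    and [measurable]: "psi \<in> borel_measurable mu" and psi: "\<And>x. \<bar>psi x\<bar> \<le> S" and S: "0 < S"
    and \<epsilon>: "0 < \<epsilon>"
  shows "measure (X N t) {xs \<in> space (X N t).
      \<epsilon> < \<bar>\<integral>x. psi x * (pf_dens mu a b y N (Suc t) xs x - F (Suc t) x) \<partial>mu\<bar>}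
    \<le> 2 * alpha t * exp (- (real N * \<epsilon>\<^sup>2) / (\<delta> t * S\<^sup>2))"
proof -
  interpret prob_space "X N t" by (rule prob_space_particles[OF N])
  define C1 where "C1 = {xs \<in> space (X N t). \<epsilon> * \<kappa> (Suc t) / 2
      < \<bar>(\<Sum>i<N. L (Suc t) psi (xs i)) / real N - m t (L (Suc t) psi)\<bar>}"
  define C2 where "C2 = {xs \<in> space (X N t). \<epsilon> / S * \<kappa> (Suc t) / 2
      < \<bar>(\<Sum>i<N. L1 (Suc t) (xs i)) / real N - m t (L1 (Suc t))\<bar>}"
  have C1: "C1 \<in> events" and C2: "C2 \<in> events"
    unfolding C1_def C2_def sets_particles[OF N] space_particles[OF N] by measurable
  have "measure (X N t) {xs \<in> space (X N t).
      \<epsilon> < \<bar>\<integral>x. psi x * (pf_dens mu a b y N (Suc t) xs x - F (Suc t) x) \<partial>mu\<bar>}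
    \<le> measure (X N t) (C1 \<union> C2)"
  proof (intro finite_measure_mono subsetI)
    fix xs assume "xs \<in> {xs \<in> space (X N t).
      \<epsilon> < \<bar>\<integral>x. psi x * (pf_dens mu a b y N (Suc t) xs x - F (Suc t) x) \<partial>mu\<bar>}"
    then show "xs \<in> C1 \<union> C2"
      using pf_deviation_split[of N psi S \<epsilon> t xs, OF N _ psi S]
      by (auto simp: C1_def C2_def integral_mult_pf_dens_diff_filt[of N psi S t xs, OF N _ psi])
  qed (use C1 C2 in auto)
  also have "\<dots> \<le> measure (X N t) C1 + measure (X N t) C2"
    using C1 C2 by (rule measure_Un_le)
  also have "measure (X N t) C1 \<le> alpha t * exp (- (real N * \<epsilon>\<^sup>2) / (\<delta> t * S\<^sup>2))"
    unfolding C1_def by (rule L_mean_deviation_le[OF N IH _ psi S \<epsilon>]) simp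
  also have "measure (X N t) C2 \<le> alpha t * exp (- (real N * (\<epsilon> / S)\<^sup>2) / (\<delta> t * 1\<^sup>2))"
    unfolding C2_def using S \<epsilon> by (intro L_mean_deviation_le[OF N IH]) auto
  finally show ?thesis
    using S by (simp add: power_divide mult_ac)
qed

lemma concentration_bound_Suc:
  assumes S: "0 < S"
  shows "2 * exp (- (real N * (\<epsilon> / 2)\<^sup>2) / (2 * S\<^sup>2))
      + 2 * alpha t * exp (- (real N * (\<epsilon> / 2)\<^sup>2) / (\<delta> t * S\<^sup>2))
    \<le> alpha (Suc t) * exp (- (real N * \<epsilon>\<^sup>2) / (\<beta> (Suc t) * S\<^sup>2))"
proof -
  define E where "E = exp (- (real N * \<epsilon>\<^sup>2) / (\<beta> (Suc t) * S\<^sup>2))"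
  have "exp (- (real N * (\<epsilon> / 2)\<^sup>2) / (2 * S\<^sup>2)) = exp (- (real N * \<epsilon>\<^sup>2) / (8 * S\<^sup>2))"
    by (simp add: power2_eq_square field_simps)
  also have "\<dots> \<le> E"
    unfolding E_def using S
    by (intro exp_neg_divide_mono mult_right_mono) (auto simp: beta_Suc_eq simp del: beta.simps)
  finally have first: "exp (- (real N * (\<epsilon> / 2)\<^sup>2) / (2 * S\<^sup>2)) \<le> E" .
  have "exp (- (real N * (\<epsilon> / 2)\<^sup>2) / (\<delta> t * S\<^sup>2)) = exp (- (real N * \<epsilon>\<^sup>2) / ((4 * \<delta> t) * S\<^sup>2))"
    using delta_pos[of t] S by (simp add: power2_eq_square field_simps)
  also have "\<dots> \<le> E"
    unfolding E_def using S delta_pos[of t]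
    by (intro exp_neg_divide_mono mult_right_mono) (auto simp: beta_Suc_eq simp del: beta.simps)
  finally have second: "exp (- (real N * (\<epsilon> / 2)\<^sup>2) / (\<delta> t * S\<^sup>2)) \<le> E" .
  have "2 * exp (- (real N * (\<epsilon> / 2)\<^sup>2) / (2 * S\<^sup>2))
      + 2 * alpha t * exp (- (real N * (\<epsilon> / 2)\<^sup>2) / (\<delta> t * S\<^sup>2)) \<le> 2 * E + 2 * alpha t * E"
    using first second alpha_ge_two[of t] by (intro add_mono mult_left_mono) auto
  also have "\<dots> = (2 + 2 * alpha t) * E"
    by (simp add: algebra_simps)
  also have "\<dots> \<le> alpha (Suc t) * E"
    unfolding E_def using alpha_ge_two[of t] by (intro mult_right_mono) auto
  finally show ?thesis unfolding E_def .
qed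

lemma particle_concentration_Suc:
  assumes N: "1 \<le> N" and IH: "particle_concentration N t"
  shows "particle_concentration N (Suc t)"
  unfolding particle_concentration_def
proof (intro allI impI)
  fix psi :: "'a \<Rightarrow> real" and S \<epsilon> :: real
  assume psi_measurable [measurable]: "psi \<in> borel_measurable mu" and psi': "\<forall>x. \<bar>psi x\<bar> \<le> S"
    and S: "0 < S" and \<epsilon>: "0 < \<epsilon>"
  have psi: "\<And>x. \<bar>psi x\<bar> \<le> S" using psi' by blast
  let ?K = "\<lambda>xs. PiM {..<N} (\<lambda>_. density mu (\<lambda>x. ennreal (pf_dens mu a b y N (Suc t) xs x)))"
  let ?mean = "\<lambda>z. (\<Sum>i<N. psi (z i)) / real N"
  define A where "A = {z \<in> space (PiM {..<N} (\<lambda>_. mu)). \<epsilon> < \<bar>?mean z - m (Suc t) psi\<bar>}"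
  define C where "C = {xs \<in> space (X N t).
      \<epsilon> / 2 < \<bar>\<integral>x. psi x * (pf_dens mu a b y N (Suc t) xs x - F (Suc t) x) \<partial>mu\<bar>}"
  have C_event: "C \<in> sets (X N t)"
    unfolding C_def by (rule pf_deviation_event[OF N psi_measurable psi])
  have kernel_bound: "measure (?K xs) A \<le> 2 * exp (- (real N * (\<epsilon> / 2)\<^sup>2) / (2 * S\<^sup>2))"
    if "xs \<notin> C" "xs \<in> space (X N t)" for xs
    unfolding A_def
  proof (rule hoeffding_iid_density_around[OF prob_density_pf_dens[OF N] psi_measurable psi S N \<epsilon>])
    show "\<bar>(\<integral>x. psi x * pf_dens mu a b y N (Suc t) xs x \<partial>mu) - m (Suc t) psi\<bar> \<le> \<epsilon> / 2"
      using that unfolding C_def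
      by (simp add: integral_mult_pf_dens_diff_filt[of N psi S t xs, OF N psi_measurable psi]
          integral_mult_pf_dens(2)[of N psi S t xs, OF N psi_measurable psi])
  qed
  have "measure (X N (Suc t)) {xs \<in> space (X N (Suc t)). \<epsilon> < \<bar>?mean xs - m (Suc t) psi\<bar>}
      = measure (X N t \<bind> ?K) A"
    unfolding A_def space_particles[OF N] by (simp only: particles.simps(2))
  also have "\<dots> \<le> 2 * exp (- (real N * (\<epsilon> / 2)\<^sup>2) / (2 * S\<^sup>2)) + measure (X N t) C"
    using kernel_bound
    by (intro measure_bind_le[OF particles_in_prob_algebra[OF N] measurable_pf_kernel[OF N] _ C_event])
       (auto simp: A_def)
  also have "measure (X N t) C \<le> 2 * alpha t * exp (- (real N * (\<epsilon> / 2)\<^sup>2) / (\<delta> t * S\<^sup>2))"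
    unfolding C_def using \<epsilon> by (intro pf_deviation_le N IH psi S) auto
  also have "2 * exp (- (real N * (\<epsilon> / 2)\<^sup>2) / (2 * S\<^sup>2))
      + 2 * alpha t * exp (- (real N * (\<epsilon> / 2)\<^sup>2) / (\<delta> t * S\<^sup>2))
    \<le> alpha (Suc t) * exp (- (real N * \<epsilon>\<^sup>2) / (\<beta> (Suc t) * S\<^sup>2))"
    by (rule concentration_bound_Suc[OF S])
  finally show "measure (X N (Suc t)) {xs \<in> space (X N (Suc t)). \<epsilon> < \<bar>?mean xs - m (Suc t) psi\<bar>}
      \<le> alpha (Suc t) * exp (- (real N * \<epsilon>\<^sup>2) / (\<beta> (Suc t) * S\<^sup>2))"
    by simp
qed

lemma particle_concentration: "1 \<le> N \<Longrightarrow> particle_concentration N T"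
  by (induction T) (auto intro: particle_concentration_0 particle_concentration_Suc)

lemma mean_deviation_le:
  assumes N: "1 \<le> N" and \<epsilon>: "0 < \<epsilon>"
    and psi_measurable: "psi \<in> borel_measurable mu" and bounded: "bounded (range psi)"
  shows "measure (X N T) {xs \<in> space (X N T). \<epsilon> < \<bar>(\<Sum>i<N. psi (xs i)) / real N - m T psi\<bar>}
    \<le> alpha T * exp (- (real N * \<epsilon>\<^sup>2) / (\<beta> T * (SUP x. \<bar>psi x\<bar>)\<^sup>2))"
proof (cases "(SUP x. \<bar>psi x\<bar>) = 0")
  case True
  interpret prob_space "X N T" by (rule prob_space_particles[OF N])
  show ?thesis using True alpha_ge_two[of T] order_trans[OF prob_le_1] by simp
next
  case False
  then have "0 < (SUP x. \<bar>psi x\<bar>)"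
    using abs_le_SUP_abs[OF bounded, of undefined] by linarith
  then show ?thesis
    using abs_le_SUP_abs[OF bounded] \<epsilon> psi_measurable
    by (intro particle_concentrationD[OF particle_concentration[OF N]])
qed

lemma density_deviation_le:
  assumes N: "1 \<le> N" and \<epsilon>: "0 < \<epsilon>"
    and psi_measurable: "psi \<in> borel_measurable mu" and bounded: "bounded (range psi)"
  shows "measure (X N t) {xs \<in> space (X N t).
      \<epsilon> < \<bar>\<integral>x. psi x * (pf_dens mu a b y N (Suc t) xs x - F (Suc t) x) \<partial>mu\<bar>}
    \<le> alpha (Suc t) * exp (- (real N * \<epsilon>\<^sup>2) / (\<beta> (Suc t) * (SUP x. \<bar>psi x\<bar>)\<^sup>2))"
proof (cases "(SUP x. \<bar>psi x\<bar>) = 0")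
  case True
  interpret prob_space "X N t" by (rule prob_space_particles[OF N])
  show ?thesis using True alpha_ge_two[of "Suc t"] order_trans[OF prob_le_1] by simp
next
  case False
  define S where "S = (SUP x. \<bar>psi x\<bar>)"
  have S: "0 < S"
    using False abs_le_SUP_abs[OF bounded, of undefined] unfolding S_def by linarith
  have "measure (X N t) {xs \<in> space (X N t).
      \<epsilon> < \<bar>\<integral>x. psi x * (pf_dens mu a b y N (Suc t) xs x - F (Suc t) x) \<partial>mu\<bar>}
    \<le> 2 * alpha t * exp (- (real N * \<epsilon>\<^sup>2) / (\<delta> t * S\<^sup>2))"
    using abs_le_SUP_abs[OF bounded] unfolding S_def[symmetric]
    by (intro pf_deviation_le N particle_concentration psi_measurable S \<epsilon>)
  also have "\<dots> \<le> alpha (Suc t) * exp (- (real N * \<epsilon>\<^sup>2) / (\<beta> (Suc t) * S\<^sup>2))"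
    using S delta_pos[of t] alpha_ge_two[of t]
    by (intro mult_mono exp_neg_divide_mono mult_right_mono) (auto simp: beta_Suc_eq simp del: beta.simps)
  finally show ?thesis unfolding S_def .
qed

end


theorem lemma2p1:
  fixes mu :: "'a::euclidean_space measure" and nu :: "'b::euclidean_space measure"
    and a0 :: "'a \<Rightarrow> real" and a :: "nat \<Rightarrow> 'a \<Rightarrow> 'a \<Rightarrow> real"
    and b :: "nat \<Rightarrow> 'a \<Rightarrow> 'b \<Rightarrow> real" and y :: "nat \<Rightarrow> 'b" and psi :: "'a \<Rightarrow> real"
  assumes mu: "sets mu = sets borel" "sigma_finite_measure mu"
    and nu: "sets nu = sets borel" "sigma_finite_measure nu"
    and a0: "a0 \<in> borel_measurable mu" "\<forall>x. a0 x \<ge> 0" "(\<integral>\<^sup>+ x. ennreal (a0 x) \<partial>mu) = 1"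
    and a: "\<forall>t\<ge>1. (\<lambda>(x, x'). a t x x') \<in> borel_measurable (mu \<Otimes>\<^sub>M mu)"
           "\<forall>t\<ge>1. \<forall>x x'. a t x x' \<ge> 0"
           "\<forall>t\<ge>1. \<forall>x. (\<integral>\<^sup>+ x'. ennreal (a t x x') \<partial>mu) = 1"
    and b: "\<forall>t\<ge>1. (\<lambda>(x, v). b t x v) \<in> borel_measurable (mu \<Otimes>\<^sub>M nu)"
           "\<forall>t\<ge>1. \<forall>x v. b t x v \<ge> 0"
           "\<forall>t\<ge>1. \<forall>x. (\<integral>\<^sup>+ v. ennreal (b t x v) \<partial>nu) = 1"
    and A0: "\<forall>t\<ge>1. (SUP x. Lone mu a b y t x) < \<top>"
            "\<forall>t\<ge>1. \<forall>x. Lone mu a b y t x > 0"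
    and psi: "psi \<in> borel_measurable mu" "bounded (range psi)"
  shows "(\<forall>T N (\<epsilon>::real). N \<ge> 1 \<and> \<epsilon> > 0 \<longrightarrow>
            measure (particles mu a0 a b y N T)
              {xs \<in> space (particles mu a0 a b y N T).
                 \<bar>(\<Sum>i<N. psi (xs i)) / real N - mfilt mu a0 a b y T psi\<bar> > \<epsilon>}
            \<le> alpha T * exp (- (real N * \<epsilon>\<^sup>2) /
                 (beta (gamma mu a b y) (kappa mu a0 a b y) T * (SUP x. \<bar>psi x\<bar>)\<^sup>2)))
       \<and> (\<forall>T N (\<epsilon>::real). T \<ge> 1 \<and> N \<ge> 1 \<and> \<epsilon> > 0 \<longrightarrow>
            measure (particles mu a0 a b y N (T - 1))
              {xs \<in> space (particles mu a0 a b y N (T - 1)).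
                 \<bar>(\<integral> x. psi x * (pf_dens mu a b y N T xs x - filt mu a0 a b y T x) \<partial>mu)\<bar> > \<epsilon>}
            \<le> alpha T * exp (- (real N * \<epsilon>\<^sup>2) /
                 (beta (gamma mu a b y) (kappa mu a0 a b y) T * (SUP x. \<bar>psi x\<bar>)\<^sup>2)))"
proof -
  have space_mu: "space mu = UNIV" and space_nu: "space nu = UNIV"
    using sets_eq_imp_space_eq[OF mu(1)] sets_eq_imp_space_eq[OF nu(1)] by simp_all
  interpret hmm_filter mu a0 a b y
  proof (rule hmm_filter.intro)
    show "prob_density mu a0"
      using a0 by (simp add: prob_density_def)
    show "(\<lambda>x. b (Suc t) x (y (Suc t))) \<in> borel_measurable mu" for t
      using b(1) space_nu by (intro measurable_Pair_compose_split[where f = "b (Suc t)"]) auto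
  qed (use mu space_mu a b A0 in \<open>simp_all\<close>)
  show ?thesis
    apply (intro conjI allI impI; elim conjE)
    subgoal using mean_deviation_le[OF _ _ psi] by blast
    subgoal for T N \<epsilon>
      using density_deviation_le[OF _ _ psi, of N \<epsilon> "T - 1"]
      by (simp add: Suc_diff_1 del: beta.simps alpha.simps filt.simps)
    done
qed

end
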